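(* Let $g$ be a continuous function on $[a,b]$ which is DC on $(a,b)$, and let $P\subset[a,b]$ be a nowhere dense set. Then the set $g(P)$ is nowhere dense in $\mathbb{R}$.
   Context: A function on an open interval is DC if it is the difference of two convex functions on that interval. *)

theory Defs
  imports "HOL-Analysis.Analysis"
begin

definition DC_on :: "real set \<Rightarrow> (real \<Rightarrow> real) \<Rightarrow> bool" where
  "DC_on S g \<longleftrightarrow> (\<exists>u v. convex_on S u \<and> convex_on S v \<and> (\<forall>x\<in>S. g x = u x - v x))"

definition nowhere_dense :: "real set \<Rightarrow> bool" where
  "nowhere_dense A \<longleftrightarrow> interior (closure A) = {}"

end

theory Submission
  imports Defs
begin

text \<open>Write \<open>g = u - v\<close> with \<open>u, v\<close> convex on \<open>(a,b)\<close> and choose subgradients \<open>\<phi>, \<psi>\<close> of \<open>u, v\<close>.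
  They are monotone, hence continuous outside a countable set \<open>D\<close>. At \<open>x \<notin> D\<close> the derivative
  \<open>g' x = \<phi> x - \<psi> x\<close> exists, and if it is nonzero then \<open>\<phi> > \<psi>\<close> (or \<open>\<phi> < \<psi>\<close>) uniformly near \<open>x\<close>,
  so \<open>g\<close> is strictly monotone near \<open>x\<close>. Thus \<open>[a,b]\<close> is covered by the interiors of countably many
  rational intervals on which \<open>g\<close> is injective, together with a remainder on which \<open>g' = 0\<close> up to a
  countable set, whose image is null by Sard's lemma. This splits the closed nowhere dense set
  \<open>closure P\<close> into countably many compact pieces whose images are closed with empty interior
  (on the injective pieces \<open>g\<close> is a homeomorphism onto its image, and null sets have no interior),
  and the Baire category theorem concludes.\<close>

lemma negligible_image_zero_derivative:
  fixes g :: "real \<Rightarrow> real"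
  assumes "\<And>x. x \<in> S \<Longrightarrow> (g has_real_derivative 0) (at x)"
  shows "negligible (g ` S)"
proof -
  define F :: "real^1 \<Rightarrow> real^1" where "F = (\<lambda>w. vec (g (w$1)))"
  have der: "(F has_derivative (\<lambda>h. 0)) (at w within vec ` S)" if "w \<in> vec ` S" for w
  proof -
    obtain x where x: "x \<in> S" "w = vec x" using \<open>w \<in> vec ` S\<close> by auto
    have "(g has_derivative (\<lambda>h. 0)) (at (w$1))"
      using assms[OF x(1)] x(2) by (simp add: has_field_derivative_def mult_zero_left[abs_def])
    moreover have "((\<lambda>w::real^1. w$1) has_derivative (\<lambda>h. h$1)) (at w)"
      by (simp add: bounded_linear_vec_nth bounded_linear_imp_has_derivative)
    ultimately have "((\<lambda>w. g (w$1)) has_derivative (\<lambda>h. 0)) (at w)"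
      using has_derivative_compose by fastforce
    moreover have "(vec has_derivative vec) (at (g (w$1)))"
      by (simp add: linear_imp_has_derivative)
    ultimately have "((\<lambda>w. vec (g (w$1)) :: real^1) has_derivative (\<lambda>h. vec 0)) (at w)"
      using has_derivative_compose by fastforce
    then show ?thesis
      unfolding F_def by (simp add: has_derivative_at_withinI)
  qed
  have "negligible (F ` vec ` S)"
    by (rule baby_Sard[OF _ der]) (auto simp: matrix_def rank_0[unfolded zero_vec_def])
  moreover have "F ` vec ` S = vec ` g ` S"
    unfolding F_def by (auto simp: image_iff)
  ultimately have "negligible (vec ` g ` S :: (real^1) set)"
    by simp
  then have "negligible ((\<lambda>w::real^1. w$1) ` vec ` g ` S)"
    by (rule negligible_differentiable_image_negligible[rotated])
      (auto intro!: differentiable_at_imp_differentiable_on bounded_linear_imp_differentiable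
        bounded_linear_vec_nth)
  moreover have "(\<lambda>w::real^1. w$1) ` vec ` g ` S = g ` S"
    by (auto simp: image_iff)
  ultimately show ?thesis
    by simp
qed

lemma negligible_countable:
  fixes S :: "'a::euclidean_space set"
  assumes "countable S"
  shows "negligible S"
  using negligible_countable_Union[of "(\<lambda>x. {x}) ` S"] assms by auto

lemma negligible_imp_interior_empty:
  fixes S :: "'a::euclidean_space set"
  assumes "negligible S"
  shows "interior S = {}"
  using open_not_negligible[of "interior S"] negligible_subset[OF assms interior_subset] by auto

lemma convex_on_slopes_le:
  fixes u :: "real \<Rightarrow> real"
  assumes "convex_on I u" "t \<in> I" "y \<in> I" "t < x" "x < y"
  shows "(u x - u t) / (x - t) \<le> (u y - u x) / (y - x)"
proof -
  have "(u t - u x) / (t - x) \<le> (u x - u y) / (x - y)"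
    using convex_on_slope_le[OF assms] by linarith
  then show ?thesis
    by (metis minus_diff_eq minus_divide_divide)
qed

definition subgradient_on :: "real set \<Rightarrow> (real \<Rightarrow> real) \<Rightarrow> (real \<Rightarrow> real) \<Rightarrow> bool" where
  "subgradient_on S u \<phi> \<longleftrightarrow> (\<forall>x\<in>S. \<forall>y\<in>S. \<phi> x * (y - x) \<le> u y - u x)"

lemma subgradient_on_subset: "subgradient_on S u \<phi> \<Longrightarrow> T \<subseteq> S \<Longrightarrow> subgradient_on T u \<phi>"
  unfolding subgradient_on_def by blast

lemma subgradient_on_slope_bounds:
  assumes "subgradient_on S u \<phi>" "x \<in> S" "z \<in> S" "x < z"
  shows "\<phi> x \<le> (u z - u x) / (z - x)" and "(u z - u x) / (z - x) \<le> \<phi> z"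
proof -
  have "\<phi> x * (z - x) \<le> u z - u x" "\<phi> z * (x - z) \<le> u x - u z"
    using assms(1-3) unfolding subgradient_on_def by blast+
  then show "\<phi> x \<le> (u z - u x) / (z - x)" "(u z - u x) / (z - x) \<le> \<phi> z"
    using \<open>x < z\<close> by (simp_all add: field_simps)
qed

lemma subgradient_on_imp_mono_on:
  assumes "subgradient_on S u \<phi>"
  shows "mono_on S \<phi>"
proof (rule mono_onI)
  fix x z assume "x \<in> S" "z \<in> S" "x \<le> z"
  then show "\<phi> x \<le> \<phi> z"
    using subgradient_on_slope_bounds[OF assms, of x z] by (cases "x = z") auto
qed

lemma convex_on_imp_subgradient_on:
  fixes u :: "real \<Rightarrow> real"
  assumes convex: "convex_on {a<..<b} u"
  obtains \<phi> where "subgradient_on {a<..<b} u \<phi>"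
proof
  define \<phi> where "\<phi> x = Inf ((\<lambda>y. (u y - u x) / (y - x)) ` {x<..<b})" for x
  have left: "(u x - u t) / (x - t) \<le> \<phi> x" if "a < t" "t < x" "x < b" for t x
    unfolding \<phi>_def
    by (rule cInf_greatest) (use that convex_on_slopes_le[OF convex] in auto)
  have right: "\<phi> x \<le> (u y - u x) / (y - x)" if "a < x" "x < y" "y < b" for x y
  proof -
    obtain t where "a < t" "t < x"
      using dense \<open>a < x\<close> by blast
    then have "bdd_below ((\<lambda>y. (u y - u x) / (y - x)) ` {x<..<b})"
      by (intro bdd_belowI2[where m="(u x - u t) / (x - t)"]) (use convex_on_slopes_le[OF convex] in auto)
    then show ?thesis
      unfolding \<phi>_def by (rule cInf_lower[rotated]) (use that in auto)
  qed
  show "subgradient_on {a<..<b} u \<phi>"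
    unfolding subgradient_on_def
  proof (intro ballI)
    fix x y assume "x \<in> {a<..<b}" "y \<in> {a<..<b}"
    then consider "y < x" "(u x - u y) / (x - y) \<le> \<phi> x" | "y = x" | "x < y" "\<phi> x \<le> (u y - u x) / (y - x)"
      using left right by (cases y x rule: linorder_cases) auto
    then show "\<phi> x * (y - x) \<le> u y - u x"
      by cases (simp_all add: field_simps)
  qed
qed

lemma subgradient_on_continuous_imp_DERIV:
  assumes sub: "subgradient_on S u \<phi>" and "open S" "x \<in> S" "isCont \<phi> x"
  shows "(u has_real_derivative \<phi> x) (at x)"
proof -
  have bound: "\<bar>(u z - u x) / (z - x) - \<phi> x\<bar> \<le> \<bar>\<phi> z - \<phi> x\<bar>" if "z \<in> S" "z \<noteq> x" for z
  proof (cases "x < z")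
    case True
    then show ?thesis
      using subgradient_on_slope_bounds[OF sub \<open>x \<in> S\<close> \<open>z \<in> S\<close>] by simp
  next
    case False
    then have "z < x" using \<open>z \<noteq> x\<close> by simp
    moreover have "(u z - u x) / (z - x) = (u x - u z) / (x - z)"
      by (metis minus_diff_eq minus_divide_divide)
    ultimately show ?thesis
      using subgradient_on_slope_bounds[OF sub \<open>z \<in> S\<close> \<open>x \<in> S\<close>] by simp
  qed
  have "\<forall>\<^sub>F z in at x. z \<in> S \<and> z \<noteq> x"
    using \<open>open S\<close> \<open>x \<in> S\<close> by (simp add: eventually_at_topological) blast
  then have "\<forall>\<^sub>F z in at x. norm ((u z - u x) / (z - x) - \<phi> x) \<le> \<bar>\<phi> z - \<phi> x\<bar>"
    by eventually_elim (use bound in auto)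
  moreover have "((\<lambda>z. \<bar>\<phi> z - \<phi> x\<bar>) \<longlongrightarrow> 0) (at x)"
    using \<open>isCont \<phi> x\<close> by (simp add: isCont_def LIM_zero tendsto_rabs_zero)
  ultimately have "((\<lambda>z. (u z - u x) / (z - x) - \<phi> x) \<longlongrightarrow> 0) (at x)"
    by (rule Lim_null_comparison)
  then show ?thesis
    by (simp add: has_field_derivative_iff LIM_zero_iff)
qed

lemma strict_mono_on_diff_subgradients:
  assumes "subgradient_on I u \<phi>" "subgradient_on I v \<psi>"
    and separated: "\<And>y z. y \<in> I \<Longrightarrow> z \<in> I \<Longrightarrow> \<psi> z < \<phi> y"
  shows "strict_mono_on I (\<lambda>x. u x - v x)"
proof (rule strict_mono_onI)
  fix y z assume "y \<in> I" "z \<in> I" "y < z"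
  have "(v z - v y) / (z - y) \<le> \<psi> z"
    using subgradient_on_slope_bounds(2)[OF assms(2) \<open>y \<in> I\<close> \<open>z \<in> I\<close> \<open>y < z\<close>] .
  also have "\<dots> < \<phi> y"
    using separated \<open>y \<in> I\<close> \<open>z \<in> I\<close> .
  also have "\<dots> \<le> (u z - u y) / (z - y)"
    using subgradient_on_slope_bounds(1)[OF assms(1) \<open>y \<in> I\<close> \<open>z \<in> I\<close> \<open>y < z\<close>] .
  finally show "u y - v y < u z - v z"
    using \<open>y < z\<close> by (simp add: divide_less_cancel)
qed

lemma diff_subgradients_locally_inj:
  assumes sub: "subgradient_on S u \<phi>" "subgradient_on S v \<psi>"
    and "open S" "x \<in> S" "isCont \<phi> x" "isCont \<psi> x" "\<phi> x \<noteq> \<psi> x"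
  obtains d where "d > 0" "ball x d \<subseteq> S" "inj_on (\<lambda>y. u y - v y) (ball x d)"
proof -
  define e where "e = \<bar>\<phi> x - \<psi> x\<bar> / 2"
  have "e > 0"
    using \<open>\<phi> x \<noteq> \<psi> x\<close> by (simp add: e_def)
  have "\<forall>\<^sub>F y in nhds x. y \<in> S \<and> dist (\<phi> y) (\<phi> x) < e \<and> dist (\<psi> y) (\<psi> x) < e"
    using eventually_nhds_in_open[OF \<open>open S\<close> \<open>x \<in> S\<close>] \<open>e > 0\<close>
      tendstoD[OF \<open>isCont \<phi> x\<close>[unfolded isCont_def tendsto_at_iff_tendsto_nhds]]
      tendstoD[OF \<open>isCont \<psi> x\<close>[unfolded isCont_def tendsto_at_iff_tendsto_nhds]]
    by (intro eventually_conj) auto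
  then obtain d where "d > 0" and
    d: "\<And>y. dist y x < d \<Longrightarrow> y \<in> S \<and> \<bar>\<phi> y - \<phi> x\<bar> < e \<and> \<bar>\<psi> y - \<psi> x\<bar> < e"
    unfolding eventually_nhds_metric dist_real_def by blast
  have ball: "ball x d \<subseteq> S"
    using d by (auto simp: dist_commute)
  then have sub_ball: "subgradient_on (ball x d) u \<phi>" "subgradient_on (ball x d) v \<psi>"
    using sub subgradient_on_subset by blast+
  have "inj_on (\<lambda>y. u y - v y) (ball x d)"
  proof (cases "\<psi> x < \<phi> x")
    case True
    then have "\<psi> z < \<phi> y" if "y \<in> ball x d" "z \<in> ball x d" for y z
      using d[of y] d[of z] that by (auto simp: e_def dist_commute abs_less_iff abs_if split: if_splits)
    then have "strict_mono_on (ball x d) (\<lambda>y. u y - v y)"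
      by (rule strict_mono_on_diff_subgradients[OF sub_ball])
    then show ?thesis
      by (rule strict_mono_on_imp_inj_on)
  next
    case False
    then have "\<phi> z < \<psi> y" if "y \<in> ball x d" "z \<in> ball x d" for y z
      using d[of y] d[of z] that \<open>\<phi> x \<noteq> \<psi> x\<close> by (auto simp: e_def dist_commute abs_less_iff abs_if split: if_splits)
    then have "strict_mono_on (ball x d) (\<lambda>y. v y - u y)"
      by (rule strict_mono_on_diff_subgradients[OF sub_ball(2,1)])
    then have "inj_on (\<lambda>y. v y - u y) (ball x d)"
      by (rule strict_mono_on_imp_inj_on)
    then show ?thesis
      by (auto simp: inj_on_def)
  qed
  with \<open>d > 0\<close> ball that show ?thesis
    by blast
qed

lemma DC_on_zero_derivative_or_locally_inj:
  assumes "DC_on {a<..<b} g"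
  obtains D where "countable D"
    and "\<And>x. x \<in> {a<..<b} - D \<Longrightarrow>
           (g has_real_derivative 0) (at x) \<or> (\<exists>d>0. ball x d \<subseteq> {a<..<b} \<and> inj_on g (ball x d))"
proof -
  obtain u v where u: "convex_on {a<..<b} u" and v: "convex_on {a<..<b} v"
    and g: "\<And>x. x \<in> {a<..<b} \<Longrightarrow> g x = u x - v x"
    using assms unfolding DC_on_def by blast
  obtain \<phi> where sub_u: "subgradient_on {a<..<b} u \<phi>"
    by (rule convex_on_imp_subgradient_on[OF u])
  obtain \<psi> where sub_v: "subgradient_on {a<..<b} v \<psi>"
    by (rule convex_on_imp_subgradient_on[OF v])
  define D where "D = {x\<in>{a<..<b}. \<not> isCont \<phi> x} \<union> {x\<in>{a<..<b}. \<not> isCont \<psi> x}"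
  have "countable D"
    unfolding D_def
    using mono_on_ctble_discont_open[OF _ subgradient_on_imp_mono_on[OF sub_u]]
      mono_on_ctble_discont_open[OF _ subgradient_on_imp_mono_on[OF sub_v]]
    by simp
  moreover have "(g has_real_derivative 0) (at x) \<or> (\<exists>d>0. ball x d \<subseteq> {a<..<b} \<and> inj_on g (ball x d))"
    if "x \<in> {a<..<b} - D" for x
  proof -
    have x: "x \<in> {a<..<b}" "isCont \<phi> x" "isCont \<psi> x"
      using that by (auto simp: D_def)
    show ?thesis
    proof (cases "\<phi> x = \<psi> x")
      case True
      have "((\<lambda>y. u y - v y) has_real_derivative \<phi> x - \<psi> x) (at x)"
        using subgradient_on_continuous_imp_DERIV[OF sub_u open_greaterThanLessThan x(1,2)]
          subgradient_on_continuous_imp_DERIV[OF sub_v open_greaterThanLessThan x(1,3)]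
        by (rule DERIV_diff)
      then have "((\<lambda>y. u y - v y) has_real_derivative 0) (at x)"
        using True by simp
      then have "(g has_real_derivative 0) (at x)"
        by (rule has_field_derivative_transform_within_open[OF _ open_greaterThanLessThan x(1)])
          (simp add: g)
      then show ?thesis ..
    next
      case False
      obtain d where "d > 0" and ball: "ball x d \<subseteq> {a<..<b}" "inj_on (\<lambda>y. u y - v y) (ball x d)"
        by (rule diff_subgradients_locally_inj[OF sub_u sub_v open_greaterThanLessThan x False])
      moreover have "inj_on g (ball x d) \<longleftrightarrow> inj_on (\<lambda>y. u y - v y) (ball x d)"
        using ball(1) g by (intro inj_on_cong) blast
      ultimately show ?thesis
        by blast
    qed
  qed
  ultimately show ?thesis
    using that by blast
qed

lemma interior_image_eq_empty_inj_on:
  fixes g :: "real \<Rightarrow> real"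
  assumes "continuous_on C g" "compact C" "inj_on g C" "A \<subseteq> C" "interior A = {}"
  shows "interior (g ` A) = {}"
proof -
  define h where "h = inv_into C g"
  define U where "U = interior (g ` A)"
  have "U \<subseteq> g ` C"
    unfolding U_def using interior_subset image_mono[OF \<open>A \<subseteq> C\<close>] by (rule order_trans)
  have h_cont: "continuous_on (g ` C) h"
    unfolding h_def using assms(1-3) by (intro continuous_on_inv) auto
  have "h ` U \<subseteq> h ` g ` A"
    unfolding U_def by (intro image_mono interior_subset)
  also have "\<dots> = A"
    unfolding h_def using assms by (intro inv_into_image_cancel)
  finally have "h ` U \<subseteq> A" .
  moreover have "open (h ` U)"
  proof (rule injective_into_1d_imp_open_map_UNIV)
    show "continuous_on U h"
      using h_cont \<open>U \<subseteq> g ` C\<close> by (rule continuous_on_subset)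
    show "inj_on h U"
      unfolding h_def using \<open>U \<subseteq> g ` C\<close> by (rule inj_on_inv_into)
  qed (simp_all add: U_def)
  ultimately have "h ` U \<subseteq> interior A"
    by (rule interior_maximal)
  then show ?thesis
    using \<open>interior A = {}\<close> by (simp add: U_def)
qed

lemma nowhere_dense_subset: "nowhere_dense B \<Longrightarrow> A \<subseteq> B \<Longrightarrow> nowhere_dense A"
  unfolding nowhere_dense_def by (metis closure_mono interior_mono subset_empty)

lemma nowhere_dense_image_by_injective_cover:
  fixes g :: "real \<Rightarrow> real"
  assumes g: "continuous_on C g" and "compact C"
    and F: "closed F" "F \<subseteq> C" "interior F = {}"
    and \<J>: "countable \<J>" "\<And>J. J \<in> \<J> \<Longrightarrow> closed J \<and> J \<subseteq> C \<and> inj_on g J"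
    and null: "negligible (g ` (F - (\<Union>J\<in>\<J>. interior J)))"
  shows "nowhere_dense (g ` F)"
proof -
  define R where "R = F - (\<Union>J\<in>\<J>. interior J)"
  define \<G> where "\<G> = insert (g ` R) ((\<lambda>J. g ` (F \<inter> J)) ` \<J>)"
  have compact: "compact T" if "closed T" "T \<subseteq> C" for T
    using \<open>compact C\<close> that by (metis compact_Int_closed inf.absorb_iff2)
  have closed_image: "closed (g ` T)" if "closed T" "T \<subseteq> C" for T
    using compact[OF that] continuous_on_subset[OF g \<open>T \<subseteq> C\<close>]
    by (intro compact_imp_closed compact_continuous_image)
  have "negligible (g ` R)"
    using null by (simp add: R_def)
  then have "interior (g ` R) = {}"
    by (rule negligible_imp_interior_empty)
  moreover have "closed (g ` R)"
    using F by (intro closed_image) (auto simp: R_def intro!: closed_Diff)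
  moreover have "closed (g ` (F \<inter> J)) \<and> interior (g ` (F \<inter> J)) = {}" if "J \<in> \<J>" for J
  proof -
    from \<J>(2)[OF that] have J: "closed J" "J \<subseteq> C" "inj_on g J"
      by auto
    have "interior (F \<inter> J) \<subseteq> interior F"
      by (simp add: interior_mono)
    then have "interior (g ` (F \<inter> J)) = {}"
      using F(3) J compact[OF J(1,2)] continuous_on_subset[OF g J(2)]
      by (intro interior_image_eq_empty_inj_on[of J]) auto
    moreover have "closed (g ` (F \<inter> J))"
      using F(1) J by (intro closed_image) auto
    ultimately show ?thesis
      by blast
  qed
  ultimately have "closed T \<and> interior T = {}" if "T \<in> \<G>" for T
    using that by (auto simp: \<G>_def)
  moreover have "countable \<G>"
    using \<open>countable \<J>\<close> by (simp add: \<G>_def)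
  ultimately have "interior (\<Union>\<G>) = {}"
    using Baire_category_alt[of euclidean \<G>] by (simp add: completely_metrizable_space_euclidean)
  moreover have "F \<subseteq> R \<union> (\<Union>J\<in>\<J>. F \<inter> J)"
    using interior_subset by (auto simp: R_def)
  then have "g ` F \<subseteq> \<Union>\<G>"
    unfolding \<G>_def by blast
  ultimately have "interior (g ` F) = {}"
    using interior_mono by blast
  then show ?thesis
    using closed_image[OF F(1,2)] by (simp add: nowhere_dense_def)
qed

definition inj_rat_subintervals :: "(real \<Rightarrow> real) \<Rightarrow> real \<Rightarrow> real \<Rightarrow> real set set" where
  "inj_rat_subintervals g a b = {{p..q} | p q. p \<in> \<rat> \<and> q \<in> \<rat> \<and> a < p \<and> q < b \<and> inj_on g {p..q}}"

lemma countable_inj_rat_subintervals: "countable (inj_rat_subintervals g a b)"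
proof -
  have "inj_rat_subintervals g a b \<subseteq> (\<lambda>(p, q). {p..q}) ` (\<rat> \<times> \<rat>)"
  proof
    fix J assume "J \<in> inj_rat_subintervals g a b"
    then obtain p q where "p \<in> \<rat>" "q \<in> \<rat>" "J = {p..q}"
      unfolding inj_rat_subintervals_def by blast
    then show "J \<in> (\<lambda>(p, q). {p..q}) ` (\<rat> \<times> \<rat>)"
      by (intro image_eqI[of _ _ "(p, q)"]) simp_all
  qed
  then show ?thesis
    by (rule countable_subset) (intro countable_image countable_SIGMA countable_rat)
qed

lemma locally_inj_imp_in_inj_rat_subinterval:
  assumes "d > 0" "ball x d \<subseteq> {a<..<b}" "inj_on g (ball x d)"
  shows "x \<in> (\<Union>J\<in>inj_rat_subintervals g a b. interior J)"
proof -
  obtain p q where "p \<in> \<rat>" "x - d < p" "p < x" "q \<in> \<rat>" "x < q" "q < x + d"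
    using Rats_dense_in_real[of "x - d" x] Rats_dense_in_real[of x "x + d"] \<open>d > 0\<close> by auto
  then have pq: "{p..q} \<subseteq> ball x d" "x \<in> interior {p..q}"
    by (auto simp: ball_eq_greaterThanLessThan)
  have "{p..q} \<subseteq> {a<..<b}"
    using pq(1) assms(2) by (rule order_trans)
  then have "a < p" "q < b"
    using \<open>p < x\<close> \<open>x < q\<close> by (auto dest: subsetD[of _ _ p] subsetD[of _ _ q])
  moreover have "inj_on g {p..q}"
    using inj_on_subset[OF assms(3) pq(1)] .
  ultimately have "{p..q} \<in> inj_rat_subintervals g a b"
    using \<open>p \<in> \<rat>\<close> \<open>q \<in> \<rat>\<close> unfolding inj_rat_subintervals_def by blast
  with pq(2) show ?thesis
    by blast
qed

lemma negligible_image_outside_inj_rat_subintervals: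
  assumes "DC_on {a<..<b} g"
  shows "negligible (g ` ({a..b} - (\<Union>J\<in>inj_rat_subintervals g a b. interior J)))"
proof -
  obtain D where "countable D" and D: "\<And>x. x \<in> {a<..<b} - D \<Longrightarrow>
      (g has_real_derivative 0) (at x) \<or> (\<exists>d>0. ball x d \<subseteq> {a<..<b} \<and> inj_on g (ball x d))"
    using DC_on_zero_derivative_or_locally_inj[OF assms] by blast
  have cover: "{a..b} - (\<Union>J\<in>inj_rat_subintervals g a b. interior J)
        \<subseteq> {x. (g has_real_derivative 0) (at x)} \<union> (D \<union> {a, b})"
  proof
    fix x assume x: "x \<in> {a..b} - (\<Union>J\<in>inj_rat_subintervals g a b. interior J)"
    show "x \<in> {x. (g has_real_derivative 0) (at x)} \<union> (D \<union> {a, b})"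
    proof (rule ccontr)
      assume "x \<notin> {x. (g has_real_derivative 0) (at x)} \<union> (D \<union> {a, b})"
      then have "x \<in> {a<..<b} - D" "\<not> (g has_real_derivative 0) (at x)"
        using x by auto
      then obtain d where "d > 0" "ball x d \<subseteq> {a<..<b}" "inj_on g (ball x d)"
        using D by blast
      then show False
        using locally_inj_imp_in_inj_rat_subinterval x by blast
    qed
  qed
  have "negligible (g ` {x. (g has_real_derivative 0) (at x)})"
    by (rule negligible_image_zero_derivative) simp
  moreover have "negligible (g ` (D \<union> {a, b}))"
    using \<open>countable D\<close> by (intro negligible_countable) auto
  ultimately have "negligible (g ` ({x. (g has_real_derivative 0) (at x)} \<union> (D \<union> {a, b})))"
    by (simp add: image_Un)
  then show ?thesis
    by (rule negligible_subset) (intro image_mono cover)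
qed

theorem proposition2p15:
  fixes g :: "real \<Rightarrow> real" and a b :: real and P :: "real set"
  assumes "continuous_on {a..b} g"
    and "DC_on {a<..<b} g"
    and "P \<subseteq> {a..b}"
    and "nowhere_dense P"
  shows "nowhere_dense (g ` P)"
proof -
  have F: "closed (closure P)" "closure P \<subseteq> {a..b}" "interior (closure P) = {}"
    using assms(3,4) by (auto simp: nowhere_dense_def closure_minimal)
  have null: "negligible (g ` (closure P - (\<Union>J\<in>inj_rat_subintervals g a b. interior J)))"
    using negligible_image_outside_inj_rat_subintervals[OF assms(2)]
    by (rule negligible_subset) (use F(2) in blast)
  have "nowhere_dense (g ` closure P)"
    by (rule nowhere_dense_image_by_injective_cover[OF assms(1) compact_Icc F
          countable_inj_rat_subintervals _ null]) (auto simp: inj_rat_subintervals_def)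
  then show ?thesis
    by (rule nowhere_dense_subset) (intro image_mono closure_subset)
qed

end
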